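(* Let $\mathcal{G}=(\mathcal{V},\mathcal{E})$ be an undirected graph with $|\mathcal{N}_i|\ge (d+1)F+1$ for every $i\in\mathcal{V}$, and suppose the misbehaving agents follow either the $F$-local or the $F$-total attack model. If the benign agents run the resilient multi-dimensional consensus algorithm described in the context (with arbitrary admissible choices of the middle points), then for every $k\ge 0$, $\varOmega(k+1)\subset\varOmega(k)$.
   Context: $\mathcal{G}=(\mathcal{V},\mathcal{E})$ is undirected, $\mathcal{N}_i=\{j\in\mathcal{V}: e_{ij}\in\mathcal{E}\}$. $\mathcal{V}=\mathcal{B}\cup\mathcal{F}$ disjointly; $\mathcal{F}$ are misbehaving agents, which may send arbitrary (possibly different to different neighbors, possibly colluding) values at each time; $\mathcal{B}$ are benign agents following the algorithm. $F$-total attack model: $|\mathcal{F}|\le F$. $F$-local attack model: $|\mathcal{F}\cap\mathcal{N}_i|\le F$ for all $i\in\mathcal{V}$. For a finite multiset $\mathcal{A}\subset\mathbb{R}^d$ of cardinality $m$ (counted with multiplicity) and integer $0\le n\le m$, let $\mathcal{S}(\mathcal{A},n)$ be the collection of all sub-multisets of $\mathcal{A}$ of cardinality $m-n$, and $\varPsi(\mathcal{A},n)=\bigcap_{S\in\mathcal{S}(\mathcal{A},n)}\mathrm{Conv}(S)$. Algorithm: each benign agent $i$ has state $x^i(k)\in\mathbb{R}^d$. At each time $k$: (1) $i$ collects in the multiset $\mathcal{X}^i(k)$ the values received from all $j\in\mathcal{N}_i$; (2) with $p=(k \bmod d)+1$, it sorts the points of $\mathcal{X}^i(k)$ in ascending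 order of their $p$-th entries; (3) $\mathcal{Y}^i(k)$ is the multiset of the first $(d+1)F+1$ sorted points, and $y^i(k)$ is any point of $\varPsi(\mathcal{Y}^i(k),F)$; (4) $\mathcal{Z}^i(k)$ is the multiset of the last $(d+1)F+1$ sorted points, and $z^i(k)$ is any point of $\varPsi(\mathcal{Z}^i(k),F)$; (5) $x^i(k+1)=\frac{1}{3}\big(x^i(k)+y^i(k)+z^i(k)\big)$, which is sent to all neighbors. $\varOmega(k)$ denotes the convex hull of $\{x^i(k): i\in\mathcal{B}\}$. *)

theory Defs
  imports "HOL-Analysis.Analysis" "HOL-Library.Multiset"
begin

definition Psi :: "('a::real_vector) multiset \<Rightarrow> nat \<Rightarrow> 'a set" where
  "Psi A n = \<Inter> {convex hull (set_mset S) | S. S \<subseteq># A \<and> size S = size A - n}"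

text \<open>Coordinate used at time k: the p-th entry with p = (k mod d) + 1, where the
  coordinates of real^'d are enumerated by the fixed list Enum.enum (0-based).\<close>
definition coord :: "nat \<Rightarrow> 'd::enum" where
  "coord k = Enum.enum ! (k mod CARD('d))"

text \<open>N: neighbour sets; msg k j i: value sent by j to i at time k; F: attack bound.
  The received multiset is sorted (ties broken arbitrarily) by the coordinate
  coord k; Y = first (d+1)F+1 points, Z = last (d+1)F+1 points.\<close>
definition admissible_step ::
  "('v \<Rightarrow> 'v set) \<Rightarrow> nat \<Rightarrow> (nat \<Rightarrow> 'v \<Rightarrow> 'v \<Rightarrow> real^('d::enum)) \<Rightarrow> nat \<Rightarrow> 'v
     \<Rightarrow> real^('d::enum) \<Rightarrow> real^('d::enum) \<Rightarrow> bool" where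
  "admissible_step N F msg k i xold xnew \<longleftrightarrow>
     (let m = (CARD('d) + 1) * F + 1 in
      \<exists>xs y z.
        mset xs = image_mset (\<lambda>j. msg k j i) (mset_set (N i)) \<and>
        sorted (map (\<lambda>v. v $ coord k) xs) \<and>
        y \<in> Psi (mset (take m xs)) F \<and>
        z \<in> Psi (mset (drop (length xs - m) xs)) F \<and>
        xnew = (1/3) *\<^sub>R (xold + y + z))"

end

theory Submission
  imports Defs
begin

text \<open>A benign agent receives the states of its benign neighbours together with at most \<open>F\<close>
  arbitrary values. Any sub-multiset of \<open>Y\<close> (or \<open>Z\<close>) of size \<open>|Y| - F\<close> can be chosen to avoid
  all faulty values, so every point of \<open>\<Psi>(Y, F)\<close> lies in the convex hull of benign states.
  The new state averages three points of \<open>\<Omega>(k)\<close>, hence stays in \<open>\<Omega>(k)\<close>.\<close>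

lemma ex_subset_mset_size:
  assumes "n \<le> size M"
  shows "\<exists>S. S \<subseteq># M \<and> size S = n"
proof -
  obtain xs where xs: "mset xs = M"
    using ex_mset by blast
  have "mset (take n xs) \<subseteq># mset xs"
    by (metis append_take_drop_id mset_append mset_subset_eq_add_left)
  moreover have "size (mset (take n xs)) = n"
    using assms xs by auto
  ultimately show ?thesis
    using xs by blast
qed

lemma Psi_subset_convex_hull:
  assumes T: "T \<subseteq># Good + Bad" and Bad: "size Bad \<le> n"
  shows "Psi T n \<subseteq> convex hull (set_mset Good)"
proof
  fix y assume y: "y \<in> Psi T n"
  have "size T - n \<le> size (T - Bad)"
    using diff_size_le_size_Diff[of T Bad] Bad by linarith
  then obtain S where S: "S \<subseteq># T - Bad" "size S = size T - n"
    using ex_subset_mset_size by blast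
  have "S \<subseteq># T"
    using S(1) by (meson diff_subset_eq_self subset_mset.order_trans)
  then have "y \<in> convex hull (set_mset S)"
    using y S(2) unfolding Psi_def by blast
  moreover have "S \<subseteq># Good"
    using S(1) T by (metis subset_eq_diff_conv subset_mset.order_trans)
  ultimately show "y \<in> convex hull (set_mset Good)"
    by (meson hull_mono set_mset_mono subsetD)
qed

lemma convex_mean3:
  assumes "convex C" "a \<in> C" "b \<in> C" "c \<in> C"
  shows "(1/3) *\<^sub>R (a + b + c) \<in> C"
proof -
  have "(1/2) *\<^sub>R b + (1/2) *\<^sub>R c \<in> C"
    using convexD[OF assms(1,3,4)] by simp
  then have "(1/3) *\<^sub>R a + (2/3) *\<^sub>R ((1/2) *\<^sub>R b + (1/2) *\<^sub>R c) \<in> C"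
    using convexD[OF assms(1,2)] by simp
  moreover have "(1/3) *\<^sub>R a + (2/3) *\<^sub>R ((1/2) *\<^sub>R b + (1/2) *\<^sub>R c) = (1/3) *\<^sub>R (a + b + c)"
    by (simp add: algebra_simps)
  ultimately show ?thesis
    by simp
qed

lemma image_mset_mset_set_split:
  assumes "finite A" "A \<subseteq> P \<union> Q" "P \<inter> Q = {}"
  shows "image_mset f (mset_set A)
    = image_mset f (mset_set (A \<inter> P)) + image_mset f (mset_set (A \<inter> Q))"
proof -
  have "A = (A \<inter> P) \<union> (A \<inter> Q)"
    using assms(2) by blast
  then have "mset_set A = mset_set (A \<inter> P) + mset_set (A \<inter> Q)"
    using mset_set_Union[of "A \<inter> P" "A \<inter> Q"] assms(1,3) by auto
  then show ?thesis
    by simp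
qed

lemma admissible_step_in_convex:
  fixes msg :: "nat \<Rightarrow> 'v \<Rightarrow> 'v \<Rightarrow> real^'d::enum"
  assumes step: "admissible_step N F msg k i xold xnew"
    and received: "image_mset (\<lambda>j. msg k j i) (mset_set (N i)) = Good + Bad"
    and Bad: "size Bad \<le> F"
    and C: "convex C" "set_mset Good \<subseteq> C" "xold \<in> C"
  shows "xnew \<in> C"
proof -
  define m where "m = (CARD('d) + 1) * F + 1"
  obtain xs y z where xs: "mset xs = Good + Bad"
    and y: "y \<in> Psi (mset (take m xs)) F"
    and z: "z \<in> Psi (mset (drop (length xs - m) xs)) F"
    and xnew: "xnew = (1/3) *\<^sub>R (xold + y + z)"
    using step unfolding admissible_step_def Let_def received m_def by blast
  have Psi_in_C: "Psi T F \<subseteq> C" if "T \<subseteq># mset xs" for T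
  proof -
    have "Psi T F \<subseteq> convex hull (set_mset Good)"
      using Psi_subset_convex_hull that xs Bad by metis
    also have "\<dots> \<subseteq> C"
      using C(1,2) by (simp add: hull_minimal)
    finally show ?thesis .
  qed
  have "mset (take m xs) \<subseteq># mset xs" "mset (drop (length xs - m) xs) \<subseteq># mset xs"
    by (metis append_take_drop_id mset_append mset_subset_eq_add_left mset_subset_eq_add_right)+
  then have "y \<in> C" "z \<in> C"
    using y z Psi_in_C by blast+
  then show ?thesis
    using convex_mean3 C(1,3) xnew by blast
qed

theorem proposition1:
  fixes V B Fa :: "'v set" and N :: "'v \<Rightarrow> 'v set" and F :: nat
    and x :: "nat \<Rightarrow> 'v \<Rightarrow> real^('d::enum)"
    and msg :: "nat \<Rightarrow> 'v \<Rightarrow> 'v \<Rightarrow> real^('d::enum)"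
  assumes finV: "finite V"
    and nbr_sub: "\<And>i. i \<in> V \<Longrightarrow> N i \<subseteq> V"
    and undirected: "\<And>i j. i \<in> V \<Longrightarrow> j \<in> V \<Longrightarrow> j \<in> N i \<longleftrightarrow> i \<in> N j"
    and noloop: "\<And>i. i \<in> V \<Longrightarrow> i \<notin> N i"
    and degree: "\<And>i. i \<in> V \<Longrightarrow> card (N i) \<ge> (CARD('d) + 1) * F + 1"
    and partition: "B \<union> Fa = V" "B \<inter> Fa = {}"
    and attack: "(\<forall>i\<in>V. card (Fa \<inter> N i) \<le> F) \<or> card Fa \<le> F"
    and benign_send: "\<And>k i j. j \<in> B \<Longrightarrow> msg k j i = x k j"
    and update: "\<And>k i. i \<in> B \<Longrightarrow> admissible_step N F msg k i (x k i) (x (Suc k) i)"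
  shows "convex hull (x (Suc k) ` B) \<subseteq> convex hull (x k ` B)"
proof (rule hull_minimal)
  show "x (Suc k) ` B \<subseteq> convex hull (x k ` B)"
  proof clarify
    fix i assume iB: "i \<in> B"
    have iV: "i \<in> V"
      using iB partition(1) by blast
    have finN: "finite (N i)"
      using nbr_sub[OF iV] finV by (rule finite_subset)
    have received: "image_mset (\<lambda>j. msg k j i) (mset_set (N i))
        = image_mset (\<lambda>j. msg k j i) (mset_set (N i \<inter> B))
          + image_mset (\<lambda>j. msg k j i) (mset_set (N i \<inter> Fa))"
      using image_mset_mset_set_split finN nbr_sub[OF iV] partition by metis
    have "card (N i \<inter> Fa) \<le> F"
    proof -
      have "finite Fa"
        using finV partition(1) by blast
      then have "card (N i \<inter> Fa) \<le> card Fa"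
        by (simp add: card_mono)
      then show ?thesis
        using attack iV by (auto simp: Int_commute)
    qed
    then show "x (Suc k) i \<in> convex hull (x k ` B)"
    proof (intro admissible_step_in_convex[OF update[OF iB] received])
      show "set_mset (image_mset (\<lambda>j. msg k j i) (mset_set (N i \<inter> B))) \<subseteq> convex hull (x k ` B)"
        using finN benign_send by (auto intro: hull_inc)
    qed (use iB in \<open>auto intro: hull_inc\<close>)
  qed
qed simp

end
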